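(* Let $N\ge 1$, let $f:Z[1,N]\times\mathbb{R}\to\mathbb{R}$ be continuous in its second variable for every $k\in Z[1,N]$, and let $p:Z[1,N+2]\to\mathbb{R}$, $q:Z[1,N+1]\to\mathbb{R}$. Assume that (1) there exists $m>0$ such that $s f(k,s)\ge 0$ for all $|s|\ge m$ and $k\in Z[1,N]$; (2) $\eta'(p)\,p_{\min}-\eta(q)\,q_{\max}>0$; that $s\mapsto f(k,s)$ is non-decreasing for every $k\in Z[1,N]$, and that $p_{\min}\eta'(p)>q_{\max}\eta(q)$. Then the boundary value problem $$\Delta^2\big(p(k)\Delta^2 y(k-2)\big)+\Delta\big(q(k)\Delta y(k-1)\big)+f(k,y(k))=0\ \ (k\in Z[1,N]),\qquad y(-1)=y(0)=y(N+1)=y(N+2)=0$$ has exactly one solution.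
   Context: $Z[a,b]=[a,b]\cap\mathbb{Z}$; $\Delta x(k)=x(k+1)-x(k)$, $\Delta^2=\Delta\circ\Delta$; $\Delta^2(p(k)\Delta^2y(k-2))$ means $\Delta^2$ applied to $k\mapsto p(k)\Delta^2 y(k-2)$, similarly for $\Delta(q(k)\Delta y(k-1))$. A solution is a function $y:Z[-1,N+2]\to\mathbb{R}$ satisfying the equation and boundary conditions. $p_{\min}=\min_{Z[1,N+2]}p$, $q_{\max}=\max_{Z[1,N+1]}q$. Let $E=\{y:Z[-1,N+2]\to\mathbb{R}\mid y(-1)=y(0)=y(N+1)=y(N+2)=0\}$ and $\tilde y=(y(1),\dots,y(N))^T$; let $V$ be the $(N+1)\times N$ matrix with $V\tilde y=(\Delta y(0),\dots,\Delta y(N))^T$ and $W$ the $(N+2)\times N$ matrix with $W\tilde y=(\Delta^2y(-1),\dots,\Delta^2y(N))^T$ for $y\in E$; $\lambda_1$, $\lambda_2$ are the smallest eigenvalues of $V^TV$ and $W^TW$. Define $\eta'(p)=\lambda_2$ if $p_{\min}\ge 0$ and $\eta'(p)=16$ if $p_{\min}<0$; $\eta(q)=\lambda_1$ if $q_{\max}<0$ and $\eta(q)=4$ if $q_{\max}\ge 0$. *)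

theory Defs
  imports Complex_Main "Jordan_Normal_Form.Char_Poly"
begin

definition fdiff :: "(int \<Rightarrow> real) \<Rightarrow> int \<Rightarrow> real" where
  "fdiff x k = x (k + 1) - x k"

definition pmin :: "nat \<Rightarrow> (int \<Rightarrow> real) \<Rightarrow> real" where
  "pmin N p = Min (p ` {1..int N + 2})"

definition qmax :: "nat \<Rightarrow> (int \<Rightarrow> real) \<Rightarrow> real" where
  "qmax N q = Max (q ` {1..int N + 1})"

text \<open>V: (N+1) x N matrix with V ytilde = (Delta y(0),...,Delta y(N)), ytilde = (y(1),...,y(N)),
  for y vanishing at -1, 0, N+1, N+2.  Column j (0-based) corresponds to y(j+1).\<close>
definition Vmat :: "nat \<Rightarrow> real mat" where
  "Vmat N = mat (N + 1) N (\<lambda>(i, j). (if j = i then 1 else 0) - (if j + 1 = i then 1 else 0))"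

text \<open>W: (N+2) x N matrix with W ytilde = (Delta^2 y(-1),...,Delta^2 y(N)); row r is Delta^2 y(r-1).\<close>
definition Wmat :: "nat \<Rightarrow> real mat" where
  "Wmat N = mat (N + 2) N (\<lambda>(r, j). (if j = r then 1 else 0) - 2 * (if j + 1 = r then 1 else 0)
                                     + (if j + 2 = r then 1 else 0))"

definition smallest_eigenvalue :: "real mat \<Rightarrow> real" where
  "smallest_eigenvalue A = Min {l. eigenvalue A l}"

definition lambda1 :: "nat \<Rightarrow> real" where
  "lambda1 N = smallest_eigenvalue (transpose_mat (Vmat N) * Vmat N)"

definition lambda2 :: "nat \<Rightarrow> real" where
  "lambda2 N = smallest_eigenvalue (transpose_mat (Wmat N) * Wmat N)"

definition eta' :: "nat \<Rightarrow> (int \<Rightarrow> real) \<Rightarrow> real" where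
  "eta' N p = (if pmin N p \<ge> 0 then lambda2 N else 16)"

definition eta :: "nat \<Rightarrow> (int \<Rightarrow> real) \<Rightarrow> real" where
  "eta N q = (if qmax N q < 0 then lambda1 N else 4)"

definition is_solution :: "nat \<Rightarrow> (int \<Rightarrow> real) \<Rightarrow> (int \<Rightarrow> real) \<Rightarrow> (int \<Rightarrow> real \<Rightarrow> real)
                           \<Rightarrow> (int \<Rightarrow> real) \<Rightarrow> bool" where
  "is_solution N p q f y \<longleftrightarrow>
     (\<forall>k \<in> {1..int N}.
        fdiff (fdiff (\<lambda>j. p j * fdiff (fdiff y) (j - 2))) k
        + fdiff (\<lambda>j. q j * fdiff y (j - 1)) k + f k (y k) = 0)
     \<and> y (-1) = 0 \<and> y 0 = 0 \<and> y (int N + 1) = 0 \<and> y (int N + 2) = 0"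

end

theory Submission
  imports Defs "HOL-Analysis.Function_Topology" "HOL-Analysis.Lipschitz"
begin

text \<open>For the difference operator \<open>L\<close> of the problem, two summations by parts give the
  discrete Green identity \<open>\<Sum> y L y = \<Sum> p (\<Delta>\<^sup>2y)\<^sup>2 - \<Sum> q (\<Delta>y)\<^sup>2\<close> for \<open>y\<close> vanishing outside \<open>[1, N]\<close>.
  Comparing \<open>\<Sum> (\<Delta>\<^sup>2y)\<^sup>2\<close> and \<open>\<Sum> (\<Delta>y)\<^sup>2\<close> with \<open>\<Sum> y\<^sup>2\<close>, from below through the
  smallest eigenvalues of \<open>W\<^sup>TW\<close> and \<open>V\<^sup>TV\<close> (a Rayleigh quotient argument) and from above by
  the elementary bounds 16 and 4, shows that \<open>L\<close> is coercive with constant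
  \<open>\<eta>'(p) p_min - \<eta>(q) q_max > 0\<close>.
  Uniqueness then follows from the monotonicity of \<open>f\<close>. For existence the problem is a
  system \<open>A x + g(x) = 0\<close> in \<open>\<real>\<^sup>N\<close> with \<open>A\<close> coercive and \<open>g\<close> monotone and continuous in
  each coordinate; such systems are solved by induction on the dimension, using the
  intermediate value theorem for the last unknown.\<close>

section \<open>Quadratic forms and the smallest eigenvalue\<close>

text \<open>Vectors of \<open>\<real>\<^sup>n\<close> are functions \<open>nat \<Rightarrow> real\<close> of which only the first \<open>n\<close> coordinates
  matter, so that the dimension can vary within one statement.\<close>

definition quad_form :: "nat \<Rightarrow> (nat \<Rightarrow> nat \<Rightarrow> real) \<Rightarrow> (nat \<Rightarrow> real) \<Rightarrow> real" where
  "quad_form n a x = (\<Sum>i<n. x i * (\<Sum>j<n. a i j * x j))"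

definition sq_norm :: "nat \<Rightarrow> (nat \<Rightarrow> real) \<Rightarrow> real" where
  "sq_norm n x = (\<Sum>i<n. (x i)\<^sup>2)"

lemma quad_form_scale: "quad_form n a (\<lambda>i. c * x i) = c\<^sup>2 * quad_form n a x"
  by (simp add: quad_form_def sum_distrib_left algebra_simps power2_eq_square)

lemma sq_norm_scale: "sq_norm n (\<lambda>i. c * x i) = c\<^sup>2 * sq_norm n x"
  by (simp add: sq_norm_def sum_distrib_left algebra_simps power2_eq_square)

lemma quad_form_cong: "(\<And>i. i < n \<Longrightarrow> x i = y i) \<Longrightarrow> quad_form n a x = quad_form n a y"
  unfolding quad_form_def by (intro sum.cong refl) auto

lemma sq_norm_cong: "(\<And>i. i < n \<Longrightarrow> x i = y i) \<Longrightarrow> sq_norm n x = sq_norm n y"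
  unfolding sq_norm_def by (intro sum.cong refl) auto

lemma sq_norm_nonneg: "0 \<le> sq_norm n x"
  unfolding sq_norm_def by (intro sum_nonneg) auto

lemma sq_norm_eq_0_iff: "sq_norm n x = 0 \<longleftrightarrow> (\<forall>i<n. x i = 0)"
  unfolding sq_norm_def by (subst sum_nonneg_eq_0_iff) auto

lemma sq_le_sq_norm: "i < n \<Longrightarrow> (x i)\<^sup>2 \<le> sq_norm n x"
  unfolding sq_norm_def by (rule member_le_sum) auto

lemma continuous_on_quad_form: "continuous_on UNIV (quad_form n a)"
  unfolding quad_form_def by (intro continuous_intros continuous_on_product_coordinates)

lemma continuous_on_sq_norm: "continuous_on UNIV (sq_norm n)"
  unfolding sq_norm_def by (intro continuous_intros continuous_on_product_coordinates)

lemma quad_form_add_unit: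
  assumes k: "k < n" and sym: "\<And>i j. i < n \<Longrightarrow> j < n \<Longrightarrow> a i j = a j i"
  shows "quad_form n a (\<lambda>i. x i + (if i = k then t else 0))
       = quad_form n a x + 2 * t * (\<Sum>j<n. a k j * x j) + t\<^sup>2 * a k k"
proof -
  let ?S = "\<lambda>i. \<Sum>j<n. a i j * x j"
  have row: "(\<Sum>j<n. a i j * (x j + (if j = k then t else 0))) = ?S i + a i k * t" for i
    using k by (simp add: distrib_left sum.distrib if_distrib[of "(*) _"] cong: if_cong)
  have col: "(\<Sum>i<n. x i * a i k) = ?S k"
    by (rule sum.cong) (auto simp: sym k)
  have "(x i + (if i = k then t else 0)) * (?S i + a i k * t)
      = x i * ?S i + t * (x i * a i k) + (if i = k then t * (?S k + a k k * t) else 0)" for i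
    by (simp add: algebra_simps)
  hence "quad_form n a (\<lambda>i. x i + (if i = k then t else 0))
      = quad_form n a x + t * (\<Sum>i<n. x i * a i k) + t * (?S k + a k k * t)"
    using k by (simp add: quad_form_def row sum.distrib sum_distrib_left)
  thus ?thesis
    unfolding col by (simp add: algebra_simps power2_eq_square)
qed

lemma sq_norm_add_unit:
  "k < n \<Longrightarrow> sq_norm n (\<lambda>i. x i + (if i = k then t else 0)) = sq_norm n x + 2 * t * x k + t\<^sup>2"
  unfolding sq_norm_def
  by (simp add: power2_sum sum.distrib if_distrib[of "\<lambda>u. u\<^sup>2"] if_distrib[of "(*) _"] sum.delta
      cong: if_cong)

lemma linear_coeff_eq_0_if_nonneg_quadratic:
  fixes b g :: real
  assumes "\<And>t. 0 \<le> 2 * t * b + t\<^sup>2 * g"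
  shows "b = 0"
proof (rule ccontr)
  assume b: "b \<noteq> 0"
  define s where "s = \<bar>g\<bar> + 1"
  have s: "s > 0" "g < 2 * s" unfolding s_def by auto
  have "2 * (- b / s) * b + (- b / s)\<^sup>2 * g = b\<^sup>2 / s\<^sup>2 * (g - 2 * s)"
    using s by (simp add: field_simps power2_eq_square)
  also have "\<dots> < 0"
    using b s by (intro mult_pos_neg) auto
  finally show False using assms[of "- b / s"] by simp
qed

lemma rayleigh_minimiser_eigenvector:
  assumes sym: "\<And>i j. i < n \<Longrightarrow> j < n \<Longrightarrow> a i j = a j i"
    and lower: "\<And>y. \<mu> * sq_norm n y \<le> quad_form n a y"
    and attained: "\<mu> * sq_norm n x = quad_form n a x"
    and k: "k < n"
  shows "(\<Sum>j<n. a k j * x j) = \<mu> * x k"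
proof -
  have "0 \<le> 2 * t * ((\<Sum>j<n. a k j * x j) - \<mu> * x k) + t\<^sup>2 * (a k k - \<mu>)" for t
  proof -
    have "\<mu> * (sq_norm n x + 2 * t * x k + t\<^sup>2) \<le> quad_form n a x + 2 * t * (\<Sum>j<n. a k j * x j) + t\<^sup>2 * a k k"
      using lower[of "\<lambda>i. x i + (if i = k then t else 0)"]
      by (simp only: quad_form_add_unit[OF k sym] sq_norm_add_unit[OF k])
    thus ?thesis using attained by (simp add: algebra_simps)
  qed
  thus ?thesis
    using linear_coeff_eq_0_if_nonneg_quadratic[of "(\<Sum>j<n. a k j * x j) - \<mu> * x k" "a k k - \<mu>"]
    by simp
qed

lemma compact_unit_sphere_coords:
  "compact {x :: nat \<Rightarrow> real. (\<forall>i\<ge>n. x i = 0) \<and> sq_norm n x = 1}"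
proof -
  define S :: "nat \<Rightarrow> real set" where "S = (\<lambda>i. if i < n then {-1..1} else {0})"
  have S_low: "S i = {-1..1}" if "i < n" for i using that by (simp add: S_def)
  have S_high: "S i = {0}" if "n \<le> i" for i using that by (simp add: S_def)
  have "compactin (product_topology (\<lambda>i. euclidean) UNIV) (PiE UNIV S)"
    unfolding compactin_PiE by (auto simp: S_def)
  hence "compact (PiE UNIV S)"
    by (simp add: euclidean_product_topology)
  moreover have "closed {x :: nat \<Rightarrow> real. sq_norm n x = 1}"
    by (rule closed_Collect_eq) (auto intro: continuous_on_sq_norm)
  ultimately have "compact (PiE UNIV S \<inter> {x. sq_norm n x = 1})"
    by (rule compact_Int_closed)
  moreover have "PiE UNIV S \<inter> {x. sq_norm n x = 1} = {x. (\<forall>i\<ge>n. x i = 0) \<and> sq_norm n x = 1}"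
  proof (intro equalityI subsetI)
    fix x assume x: "x \<in> {x. (\<forall>i\<ge>n. x i = 0) \<and> sq_norm n x = 1}"
    have "x i \<in> S i" for i
    proof (cases "i < n")
      case True
      hence "\<bar>x i\<bar> \<le> 1" using x sq_le_sq_norm[OF True, of x] by (simp add: abs_square_le_1[symmetric])
      thus ?thesis using True by (simp add: S_low abs_le_iff)
    qed (use x in \<open>simp add: S_high\<close>)
    thus "x \<in> PiE UNIV S \<inter> {x. sq_norm n x = 1}" using x by (simp add: PiE_iff)
  qed (auto simp: PiE_iff, metis S_high singletonD)
  ultimately show ?thesis by simp
qed

lemma quad_form_lower_bound_by_homogeneity:
  assumes sphere: "\<And>z. \<forall>i\<ge>n. z i = 0 \<Longrightarrow> sq_norm n z = 1 \<Longrightarrow> \<mu> \<le> quad_form n a z"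
  shows "\<mu> * sq_norm n y \<le> quad_form n a y"
proof (cases "sq_norm n y = 0")
  case True
  hence "quad_form n a y = quad_form n a (\<lambda>_. 0)"
    by (intro quad_form_cong) (simp add: sq_norm_eq_0_iff)
  thus ?thesis using True by (simp add: quad_form_def)
next
  case False
  define r where "r = sqrt (sq_norm n y)"
  have r: "r > 0" "r\<^sup>2 = sq_norm n y"
    using False sq_norm_nonneg[of n y] unfolding r_def by auto
  define z where "z i = (if i < n then (1 / r) * y i else 0)" for i
  have "sq_norm n z = sq_norm n (\<lambda>i. (1 / r) * y i)"
    by (rule sq_norm_cong) (simp add: z_def)
  also have "\<dots> = (1 / r)\<^sup>2 * sq_norm n y" by (rule sq_norm_scale)
  finally have "\<mu> \<le> quad_form n a z" using r False by (intro sphere) (simp_all add: z_def power_divide)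
  also have "quad_form n a z = quad_form n a (\<lambda>i. (1 / r) * y i)"
    by (rule quad_form_cong) (simp add: z_def)
  also have "\<dots> = (1 / r)\<^sup>2 * quad_form n a y" by (rule quad_form_scale)
  finally have "\<mu> \<le> quad_form n a y / r\<^sup>2" by (simp add: power_divide)
  thus ?thesis using r by (simp add: pos_le_divide_eq False sq_norm_nonneg order.strict_iff_order)
qed

lemma quad_form_attains_min_on_sphere:
  assumes "n \<ge> 1"
  obtains x where "sq_norm n x = 1" "\<And>y. quad_form n a x * sq_norm n y \<le> quad_form n a y"
proof -
  define K where "K = {x :: nat \<Rightarrow> real. (\<forall>i\<ge>n. x i = 0) \<and> sq_norm n x = 1}"
  have "(\<lambda>i. if i = 0 then 1 else 0) \<in> K"
    using assms by (simp add: K_def sq_norm_def if_distrib[of "\<lambda>u. u\<^sup>2"] cong: if_cong)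
  hence "K \<noteq> {}" by blast
  then obtain x where x: "x \<in> K" and min: "\<And>z. z \<in> K \<Longrightarrow> quad_form n a x \<le> quad_form n a z"
    using continuous_attains_inf[OF compact_unit_sphere_coords[of n, folded K_def] _
        continuous_on_subset[OF continuous_on_quad_form subset_UNIV]] by blast
  have "quad_form n a x * sq_norm n y \<le> quad_form n a y" for y
    using min by (intro quad_form_lower_bound_by_homogeneity) (simp add: K_def)
  moreover have "sq_norm n x = 1" using x by (simp add: K_def)
  ultimately show ?thesis using that by blast
qed

lemma finite_eigenvalues:
  fixes M :: "'a :: field mat"
  assumes "M \<in> carrier_mat n n"
  shows "finite {l. eigenvalue M l}"
proof -
  have "char_poly M \<noteq> 0"
    using degree_monic_char_poly[OF assms] by auto
  thus ?thesis
    unfolding eigenvalue_root_char_poly[OF assms] by (rule poly_roots_finite)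
qed

lemma smallest_eigenvalue_mult_sq_norm_le:
  fixes M :: "real mat"
  assumes n: "n \<ge> 1" and M: "M \<in> carrier_mat n n" and sym: "transpose_mat M = M"
  shows "smallest_eigenvalue M * sq_norm n x \<le> quad_form n (\<lambda>i j. M $$ (i, j)) x"
proof -
  let ?a = "\<lambda>i j. M $$ (i, j)"
  have a_sym: "?a i j = ?a j i" if "i < n" "j < n" for i j
    using that M by (metis carrier_matD index_transpose_mat(1) sym)
  obtain v where v1: "sq_norm n v = 1" and lower: "\<And>y. quad_form n ?a v * sq_norm n y \<le> quad_form n ?a y"
    using quad_form_attains_min_on_sphere[OF n] by blast
  let ?\<mu> = "quad_form n ?a v"
  have ev: "(\<Sum>j<n. ?a i j * v j) = ?\<mu> * v i" if "i < n" for i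
    using rayleigh_minimiser_eigenvector[OF a_sym lower _ that] v1 by simp
  have "eigenvector M (Matrix.vec n v) ?\<mu>"
    unfolding eigenvector_def
  proof (intro conjI)
    show "Matrix.vec n v \<noteq> 0\<^sub>v (dim_row M)"
    proof
      assume "Matrix.vec n v = 0\<^sub>v (dim_row M)"
      hence "\<forall>i<n. v i = 0" using M by (metis carrier_matD(1) index_vec index_zero_vec(1))
      thus False using v1 by (simp add: sq_norm_eq_0_iff[symmetric])
    qed
    show "M *\<^sub>v Matrix.vec n v = ?\<mu> \<cdot>\<^sub>v Matrix.vec n v"
      using M ev by (intro eq_vecI) (auto simp: scalar_prod_def atLeast0LessThan)
  qed (use M in auto)
  hence "smallest_eigenvalue M \<le> ?\<mu>"
    unfolding smallest_eigenvalue_def eigenvalue_def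
    using finite_eigenvalues[OF M] by (intro Min_le) (auto simp: eigenvalue_def)
  hence "smallest_eigenvalue M * sq_norm n x \<le> ?\<mu> * sq_norm n x"
    using sq_norm_nonneg by (rule mult_right_mono)
  also have "\<dots> \<le> quad_form n ?a x" by (rule lower)
  finally show ?thesis .
qed

lemma quad_form_gram:
  fixes B :: "real mat"
  assumes B: "B \<in> carrier_mat m n"
  shows "quad_form n (\<lambda>i j. (transpose_mat B * B) $$ (i, j)) x = (\<Sum>r<m. (\<Sum>i<n. B $$ (r, i) * x i)\<^sup>2)"
proof -
  have "quad_form n (\<lambda>i j. (transpose_mat B * B) $$ (i, j)) x
      = (\<Sum>i<n. \<Sum>j<n. \<Sum>r<m. (B $$ (r, i) * x i) * (B $$ (r, j) * x j))"
    unfolding quad_form_def using B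
    by (intro sum.cong refl)
       (simp add: scalar_prod_def atLeast0LessThan sum_distrib_left sum_distrib_right mult_ac)
  also have "\<dots> = (\<Sum>r<m. \<Sum>i<n. \<Sum>j<n. (B $$ (r, i) * x i) * (B $$ (r, j) * x j))"
    by (subst sum.swap) (subst sum.swap, simp add: sum.swap[of _ "{..<m}"])
  also have "\<dots> = (\<Sum>r<m. (\<Sum>i<n. B $$ (r, i) * x i)\<^sup>2)"
    by (simp add: power2_eq_square sum_product)
  finally show ?thesis .
qed

lemma smallest_eigenvalue_gram_le:
  fixes B :: "real mat"
  assumes "n \<ge> 1" and B: "B \<in> carrier_mat m n"
  shows "smallest_eigenvalue (transpose_mat B * B) * sq_norm n x \<le> (\<Sum>r<m. (\<Sum>i<n. B $$ (r, i) * x i)\<^sup>2)"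
proof -
  have "transpose_mat (transpose_mat B * B) = transpose_mat B * B"
    using B by (simp add: transpose_mult[of _ n m _ n])
  thus ?thesis
    using smallest_eigenvalue_mult_sq_norm_le[OF assms(1), of "transpose_mat B * B" x] B
    by (simp add: quad_form_gram[OF B])
qed

section \<open>The fourth-order difference operator\<close>

definition bvp_op :: "(int \<Rightarrow> real) \<Rightarrow> (int \<Rightarrow> real) \<Rightarrow> (int \<Rightarrow> real) \<Rightarrow> int \<Rightarrow> real" where
  "bvp_op p q y k =
     fdiff (fdiff (\<lambda>j. p j * fdiff (fdiff y) (j - 2))) k + fdiff (\<lambda>j. q j * fdiff y (j - 1)) k"

definition vanishes_outside :: "nat \<Rightarrow> (int \<Rightarrow> real) \<Rightarrow> bool" where
  "vanishes_outside N y \<longleftrightarrow> (\<forall>k. k < 1 \<or> k > int N \<longrightarrow> y k = 0)"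

lemma is_solution_iff:
  "is_solution N p q f y \<longleftrightarrow> (\<forall>k\<in>{1..int N}. bvp_op p q y k + f k (y k) = 0)
     \<and> y (-1) = 0 \<and> y 0 = 0 \<and> y (int N + 1) = 0 \<and> y (int N + 2) = 0"
  unfolding is_solution_def bvp_op_def ..

lemma bvp_op_explicit:
  "bvp_op p q y k =
     p (k + 2) * (y (k + 2) - 2 * y (k + 1) + y k) - 2 * p (k + 1) * (y (k + 1) - 2 * y k + y (k - 1))
     + p k * (y k - 2 * y (k - 1) + y (k - 2)) + q (k + 1) * (y (k + 1) - y k) - q k * (y k - y (k - 1))"
  unfolding bvp_op_def fdiff_def by (simp add: algebra_simps)

lemma bvp_op_local:
  assumes "\<And>j. \<bar>j - k\<bar> \<le> 2 \<Longrightarrow> y j = z j"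
  shows "bvp_op p q y k = bvp_op p q z k"
  unfolding bvp_op_explicit using assms[of "k - 2"] assms[of "k - 1"] assms[of k] assms[of "k + 1"] assms[of "k + 2"]
  by simp

lemma bvp_op_diff: "bvp_op p q (\<lambda>j. y j - z j) k = bvp_op p q y k - bvp_op p q z k"
  unfolding bvp_op_explicit by (simp add: algebra_simps)

lemma bvp_op_sum:
  assumes "finite J"
  shows "bvp_op p q (\<lambda>k. \<Sum>j\<in>J. c j * e j k) m = (\<Sum>j\<in>J. c j * bvp_op p q (e j) m)"
  using assms by (induction J rule: finite_induct) (simp_all add: bvp_op_explicit algebra_simps)

lemma summation_by_parts:
  fixes y b :: "int \<Rightarrow> real"
  shows "(\<Sum>k\<in>{1..int N}. y k * (b (k + 1) - b k)) + (\<Sum>j\<in>{1..int N + 1}. b j * (y j - y (j - 1)))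
       = b (int N + 1) * y (int N + 1) - b 1 * y 0"
proof (induction N)
  case 0
  then show ?case by (simp add: right_diff_distrib)
next
  case (Suc N)
  have "{1..int (Suc N)} = insert (int N + 1) {1..int N}" "{1..int (Suc N) + 1} = insert (int N + 2) {1..int N + 1}"
    by auto
  with Suc.IH show ?case by (simp add: algebra_simps)
qed

lemma summation_by_parts_vanishing:
  fixes b :: "int \<Rightarrow> real"
  assumes "vanishes_outside N y"
  shows "(\<Sum>k\<in>{1..int N}. y k * (b (k + 1) - b k)) = - (\<Sum>j\<in>{1..int N + 1}. b j * (y j - y (j - 1)))"
proof -
  have "y (int N + 1) = 0" "y 0 = 0" using assms by (auto simp: vanishes_outside_def)
  thus ?thesis using summation_by_parts[where N=N and y=y and b=b] by simp
qed

lemma bvp_op_green_identity: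
  assumes y: "vanishes_outside N y"
  shows "(\<Sum>k\<in>{1..int N}. y k * bvp_op p q y k)
       = (\<Sum>i\<in>{1..int N + 2}. p i * (fdiff (fdiff y) (i - 2))\<^sup>2)
         - (\<Sum>j\<in>{1..int N + 1}. q j * (fdiff y (j - 1))\<^sup>2)"
proof -
  define a where "a j = p j * fdiff (fdiff y) (j - 2)" for j
  define b where "b j = q j * fdiff y (j - 1)" for j
  define z where "z j = y j - y (j - 1)" for j
  have z: "vanishes_outside (N + 1) z" using y unfolding vanishes_outside_def z_def by auto
  have "(\<Sum>k\<in>{1..int N}. y k * fdiff (fdiff a) k) = - (\<Sum>j\<in>{1..int N + 1}. z j * (a (j + 1) - a j))"
    using summation_by_parts_vanishing[OF y, of "fdiff a"] by (simp add: fdiff_def z_def mult.commute)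
  also have "\<dots> = (\<Sum>i\<in>{1..int N + 2}. a i * (z i - z (i - 1)))"
    using summation_by_parts_vanishing[OF z, of a] by (simp add: add.commute)
  finally have fourth: "(\<Sum>k\<in>{1..int N}. y k * fdiff (fdiff a) k) = (\<Sum>i\<in>{1..int N + 2}. a i * (z i - z (i - 1)))" .
  have second: "(\<Sum>k\<in>{1..int N}. y k * fdiff b k) = - (\<Sum>j\<in>{1..int N + 1}. b j * z j)"
    using summation_by_parts_vanishing[OF y, of b] by (simp add: fdiff_def z_def)
  have "(\<Sum>k\<in>{1..int N}. y k * bvp_op p q y k)
      = (\<Sum>k\<in>{1..int N}. y k * fdiff (fdiff a) k) + (\<Sum>k\<in>{1..int N}. y k * fdiff b k)"
    unfolding bvp_op_def a_def b_def by (simp add: distrib_left sum.distrib)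
  also have "\<dots> = (\<Sum>i\<in>{1..int N + 2}. a i * (z i - z (i - 1))) - (\<Sum>j\<in>{1..int N + 1}. b j * z j)"
    unfolding fourth second by simp
  also have "\<dots> = (\<Sum>i\<in>{1..int N + 2}. p i * (fdiff (fdiff y) (i - 2))\<^sup>2)
         - (\<Sum>j\<in>{1..int N + 1}. q j * (fdiff y (j - 1))\<^sup>2)"
    by (simp add: a_def b_def z_def fdiff_def power2_eq_square algebra_simps)
  finally show ?thesis .
qed

lemma sum_lessThan_int:
  "(\<Sum>r<M. g (int r)) = (\<Sum>i\<in>{1..int M}. g (i - 1))"
proof (induction M)
  case (Suc M)
  have "{1..int (Suc M)} = insert (int M + 1) {1..int M}" by auto
  with Suc show ?case by (simp add: add.commute)
qed simp

lemma sq_norm_shift_int: "sq_norm N (\<lambda>i. y (int i + 1)) = (\<Sum>k\<in>{1..int N}. (y k)\<^sup>2)"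
  unfolding sq_norm_def using sum_lessThan_int[of "\<lambda>k. (y (k + 1))\<^sup>2" N] by simp

lemma sum_sq_shift_vanishing:
  assumes "vanishes_outside N y" "a \<le> 1 + s" "int N + s \<le> b"
  shows "(\<Sum>i\<in>{a..b}. (y (i - s))\<^sup>2) = (\<Sum>k\<in>{1..int N}. (y k)\<^sup>2)"
proof -
  have "(\<lambda>i. i - s) ` {a..b} = {a - s..b - s}"
    using image_add_atLeastAtMost'[of "- s" a b] by simp
  moreover have "inj_on (\<lambda>i. i - s) {a..b}" by (simp add: inj_on_def)
  ultimately have "(\<Sum>i\<in>{a..b}. (y (i - s))\<^sup>2) = (\<Sum>k\<in>{a - s..b - s}. (y k)\<^sup>2)"
    by (metis (no_types, lifting) sum.reindex_cong)
  also have "\<dots> = (\<Sum>k\<in>{1..int N}. (y k)\<^sup>2)"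
    by (rule sum.mono_neutral_right) (use assms in \<open>auto simp: vanishes_outside_def\<close>)
  finally show ?thesis .
qed

lemma sq_diff_le: "(a - b)\<^sup>2 \<le> 2 * a\<^sup>2 + 2 * (b :: real)\<^sup>2"
  using sum_squares_ge_zero[of "a + b" 0] by (simp add: power2_eq_square algebra_simps)

lemma sq_second_diff_le: "(a - 2 * b + c)\<^sup>2 \<le> 4 * a\<^sup>2 + 8 * b\<^sup>2 + 4 * (c :: real)\<^sup>2"
proof -
  have "0 \<le> (a + 2 * b + c)\<^sup>2 + 2 * (a - c)\<^sup>2" by simp
  thus ?thesis by (simp add: power2_eq_square algebra_simps)
qed

lemma sum_sq_fdiff_le:
  assumes "vanishes_outside N y"
  shows "(\<Sum>j\<in>{1..int N + 1}. (fdiff y (j - 1))\<^sup>2) \<le> 4 * (\<Sum>k\<in>{1..int N}. (y k)\<^sup>2)"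
proof -
  have "(\<Sum>j\<in>{1..int N + 1}. (fdiff y (j - 1))\<^sup>2)
      \<le> (\<Sum>j\<in>{1..int N + 1}. 2 * (y (j - 0))\<^sup>2 + 2 * (y (j - 1))\<^sup>2)"
    by (rule sum_mono) (simp add: fdiff_def sq_diff_le)
  also have "\<dots> = 2 * (\<Sum>j\<in>{1..int N + 1}. (y (j - 0))\<^sup>2) + 2 * (\<Sum>j\<in>{1..int N + 1}. (y (j - 1))\<^sup>2)"
    by (simp add: sum.distrib sum_distrib_left)
  also have "\<dots> = 4 * (\<Sum>k\<in>{1..int N}. (y k)\<^sup>2)"
    using sum_sq_shift_vanishing[OF assms, of 1 0 "int N + 1"] sum_sq_shift_vanishing[OF assms, of 1 1 "int N + 1"]
    by simp
  finally show ?thesis .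
qed

lemma sum_sq_fdiff2_le:
  assumes "vanishes_outside N y"
  shows "(\<Sum>i\<in>{1..int N + 2}. (fdiff (fdiff y) (i - 2))\<^sup>2) \<le> 16 * (\<Sum>k\<in>{1..int N}. (y k)\<^sup>2)"
proof -
  have "fdiff (fdiff y) (i - 2) = y (i - 0) - 2 * y (i - 1) + y (i - 2)" for i
    by (simp add: fdiff_def algebra_simps)
  hence "(\<Sum>i\<in>{1..int N + 2}. (fdiff (fdiff y) (i - 2))\<^sup>2)
      \<le> (\<Sum>i\<in>{1..int N + 2}. 4 * (y (i - 0))\<^sup>2 + 8 * (y (i - 1))\<^sup>2 + 4 * (y (i - 2))\<^sup>2)"
    by (intro sum_mono) (simp only: sq_second_diff_le)
  also have "\<dots> = 4 * (\<Sum>i\<in>{1..int N + 2}. (y (i - 0))\<^sup>2) + 8 * (\<Sum>i\<in>{1..int N + 2}. (y (i - 1))\<^sup>2)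
       + 4 * (\<Sum>i\<in>{1..int N + 2}. (y (i - 2))\<^sup>2)"
    by (simp add: sum.distrib sum_distrib_left)
  also have "\<dots> = 16 * (\<Sum>k\<in>{1..int N}. (y k)\<^sup>2)"
    using sum_sq_shift_vanishing[OF assms, of 1 0 "int N + 2"] sum_sq_shift_vanishing[OF assms, of 1 1 "int N + 2"]
      sum_sq_shift_vanishing[OF assms, of 1 2 "int N + 2"]
    by simp
  finally show ?thesis .
qed

lemma sum_if_shift:
  fixes N d r :: nat
  shows "(\<Sum>i<N. if i + d = r then g i else (0 :: real)) = (if d \<le> r \<and> r - d < N then g (r - d) else 0)"
proof -
  have "(\<Sum>i<N. if i + d = r then g i else (0 :: real)) = (\<Sum>i<N. if d \<le> r \<and> i = r - d then g (r - d) else 0)"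
    by (rule sum.cong) auto
  thus ?thesis by (cases "d \<le> r") simp_all
qed

lemma Vmat_carrier: "Vmat N \<in> carrier_mat (N + 1) N"
  by (simp add: Vmat_def)

lemma Wmat_carrier: "Wmat N \<in> carrier_mat (N + 2) N"
  by (simp add: Wmat_def)

lemma Vmat_row:
  assumes "vanishes_outside N y" "r < N + 1"
  shows "(\<Sum>i<N. Vmat N $$ (r, i) * y (int i + 1)) = fdiff y (int r)"
proof -
  have "(\<Sum>i<N. Vmat N $$ (r, i) * y (int i + 1))
      = (\<Sum>i<N. if i + 0 = r then y (int i + 1) else 0) - (\<Sum>i<N. if i + 1 = r then y (int i + 1) else 0)"
    unfolding sum_subtractf[symmetric] using assms(2)
    by (intro sum.cong refl) (auto simp: Vmat_def)
  also have "\<dots> = y (int r + 1) - y (int r)"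
    unfolding sum_if_shift using assms by (auto simp: vanishes_outside_def of_nat_diff)
  finally show ?thesis by (simp add: fdiff_def)
qed

lemma Wmat_row:
  assumes "vanishes_outside N y" "r < N + 2"
  shows "(\<Sum>i<N. Wmat N $$ (r, i) * y (int i + 1)) = fdiff (fdiff y) (int r - 1)"
proof -
  have "(\<Sum>i<N. Wmat N $$ (r, i) * y (int i + 1))
      = (\<Sum>i<N. if i + 0 = r then y (int i + 1) else 0) - 2 * (\<Sum>i<N. if i + 1 = r then y (int i + 1) else 0)
        + (\<Sum>i<N. if i + 2 = r then y (int i + 1) else 0)"
    unfolding sum_distrib_left sum_subtractf[symmetric] sum.distrib[symmetric] using assms(2)
    by (intro sum.cong refl) (auto simp: Wmat_def)
  also have "\<dots> = y (int r + 1) - 2 * y (int r) + y (int r - 1)"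
    unfolding sum_if_shift using assms by (auto simp: vanishes_outside_def of_nat_diff)
  finally show ?thesis by (simp add: fdiff_def algebra_simps)
qed

lemma lambda1_le_sum_sq_fdiff:
  assumes "N \<ge> 1" and y: "vanishes_outside N y"
  shows "lambda1 N * (\<Sum>k\<in>{1..int N}. (y k)\<^sup>2) \<le> (\<Sum>j\<in>{1..int N + 1}. (fdiff y (j - 1))\<^sup>2)"
proof -
  have "lambda1 N * sq_norm N (\<lambda>i. y (int i + 1)) \<le> (\<Sum>r<N + 1. (\<Sum>i<N. Vmat N $$ (r, i) * y (int i + 1))\<^sup>2)"
    unfolding lambda1_def by (rule smallest_eigenvalue_gram_le[OF assms(1) Vmat_carrier])
  also have "\<dots> = (\<Sum>r<N + 1. (fdiff y (int r))\<^sup>2)"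
    by (intro sum.cong refl) (simp add: Vmat_row[OF y])
  also have "\<dots> = (\<Sum>j\<in>{1..int N + 1}. (fdiff y (j - 1))\<^sup>2)"
    using sum_lessThan_int[of "\<lambda>k. (fdiff y k)\<^sup>2" "N + 1"] by (simp add: add.commute)
  finally show ?thesis unfolding sq_norm_shift_int .
qed

lemma lambda2_le_sum_sq_fdiff2:
  assumes "N \<ge> 1" and y: "vanishes_outside N y"
  shows "lambda2 N * (\<Sum>k\<in>{1..int N}. (y k)\<^sup>2) \<le> (\<Sum>i\<in>{1..int N + 2}. (fdiff (fdiff y) (i - 2))\<^sup>2)"
proof -
  have "lambda2 N * sq_norm N (\<lambda>i. y (int i + 1)) \<le> (\<Sum>r<N + 2. (\<Sum>i<N. Wmat N $$ (r, i) * y (int i + 1))\<^sup>2)"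
    unfolding lambda2_def by (rule smallest_eigenvalue_gram_le[OF assms(1) Wmat_carrier])
  also have "\<dots> = (\<Sum>r<N + 2. (fdiff (fdiff y) (int r - 1))\<^sup>2)"
    by (intro sum.cong refl) (simp add: Wmat_row[OF y])
  also have "\<dots> = (\<Sum>i\<in>{1..int N + 2}. (fdiff (fdiff y) (i - 2))\<^sup>2)"
    using sum_lessThan_int[of "\<lambda>k. (fdiff (fdiff y) (k - 1))\<^sup>2" "N + 2"]
    by (simp add: diff_diff_eq add.commute)
  finally show ?thesis unfolding sq_norm_shift_int .
qed

lemma eta'_pmin_le:
  assumes "N \<ge> 1" and y: "vanishes_outside N y"
  shows "eta' N p * pmin N p * (\<Sum>k\<in>{1..int N}. (y k)\<^sup>2)
         \<le> (\<Sum>i\<in>{1..int N + 2}. p i * (fdiff (fdiff y) (i - 2))\<^sup>2)"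
proof -
  let ?Y = "\<Sum>k\<in>{1..int N}. (y k)\<^sup>2" and ?S = "\<Sum>i\<in>{1..int N + 2}. (fdiff (fdiff y) (i - 2))\<^sup>2"
  have "eta' N p * pmin N p * ?Y \<le> pmin N p * ?S"
  proof (cases "pmin N p \<ge> 0")
    case True
    thus ?thesis using mult_left_mono[OF lambda2_le_sum_sq_fdiff2[OF assms] True]
      by (simp add: eta'_def mult_ac)
  next
    case False
    thus ?thesis using mult_left_mono_neg[OF sum_sq_fdiff2_le[OF y], of "pmin N p"]
      by (simp add: eta'_def mult_ac)
  qed
  also have "pmin N p * ?S \<le> (\<Sum>i\<in>{1..int N + 2}. p i * (fdiff (fdiff y) (i - 2))\<^sup>2)"
    unfolding sum_distrib_left pmin_def by (intro sum_mono mult_right_mono Min_le) auto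
  finally show ?thesis .
qed

lemma qmax_le_eta:
  assumes "N \<ge> 1" and y: "vanishes_outside N y"
  shows "(\<Sum>j\<in>{1..int N + 1}. q j * (fdiff y (j - 1))\<^sup>2)
         \<le> eta N q * qmax N q * (\<Sum>k\<in>{1..int N}. (y k)\<^sup>2)"
proof -
  let ?Y = "\<Sum>k\<in>{1..int N}. (y k)\<^sup>2" and ?S = "\<Sum>j\<in>{1..int N + 1}. (fdiff y (j - 1))\<^sup>2"
  have "(\<Sum>j\<in>{1..int N + 1}. q j * (fdiff y (j - 1))\<^sup>2) \<le> qmax N q * ?S"
    unfolding sum_distrib_left qmax_def by (intro sum_mono mult_right_mono Max_ge) auto
  also have "qmax N q * ?S \<le> eta N q * qmax N q * ?Y"
  proof (cases "qmax N q < 0")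
    case True
    thus ?thesis using mult_left_mono_neg[OF lambda1_le_sum_sq_fdiff[OF assms], of "qmax N q"]
      by (simp add: eta_def mult_ac)
  next
    case False
    thus ?thesis using mult_left_mono[OF sum_sq_fdiff_le[OF y], of "qmax N q"]
      by (simp add: eta_def mult_ac)
  qed
  finally show ?thesis .
qed

lemma bvp_op_coercive:
  assumes "N \<ge> 1" and "vanishes_outside N y"
  shows "(eta' N p * pmin N p - eta N q * qmax N q) * (\<Sum>k\<in>{1..int N}. (y k)\<^sup>2)
         \<le> (\<Sum>k\<in>{1..int N}. y k * bvp_op p q y k)"
  using eta'_pmin_le[OF assms, of p] qmax_le_eta[OF assms, of q] bvp_op_green_identity[OF assms(2), of p q]
  by (simp add: left_diff_distrib)

section \<open>Coercive monotone systems\<close>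

lemma mono_diff_mult_nonneg: "mono (g :: real \<Rightarrow> real) \<Longrightarrow> 0 \<le> (x - y) * (g x - g y)"
  by (cases "x \<le> y") (auto simp: monoD mult_nonpos_nonpos)

lemma coercive_monotone_ineq:
  fixes a :: "nat \<Rightarrow> nat \<Rightarrow> real" and g :: "nat \<Rightarrow> real \<Rightarrow> real"
  assumes coercive: "\<And>x. c * sq_norm n x \<le> quad_form n a x"
    and mono: "\<And>i. i < n \<Longrightarrow> mono (g i)"
  shows "c * sq_norm n (\<lambda>i. u i - v i)
    \<le> (\<Sum>i<n. (u i - v i) * (((\<Sum>j<n. a i j * u j) + g i (u i)) - ((\<Sum>j<n. a i j * v j) + g i (v i))))"
proof -
  have "(\<Sum>i<n. (u i - v i) * (((\<Sum>j<n. a i j * u j) + g i (u i)) - ((\<Sum>j<n. a i j * v j) + g i (v i))))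
     = quad_form n a (\<lambda>i. u i - v i) + (\<Sum>i<n. (u i - v i) * (g i (u i) - g i (v i)))"
    unfolding quad_form_def sum.distrib[symmetric]
    by (intro sum.cong refl) (simp add: algebra_simps sum_subtractf)
  moreover have "0 \<le> (\<Sum>i<n. (u i - v i) * (g i (u i) - g i (v i)))"
    by (intro sum_nonneg mono_diff_mult_nonneg mono) auto
  ultimately show ?thesis using coercive[of "\<lambda>i. u i - v i"] by linarith
qed

lemma coercive_restrict:
  assumes "\<And>x. c * sq_norm (Suc n) x \<le> quad_form (Suc n) a x"
  shows "c * sq_norm n x \<le> quad_form n a x"
proof -
  define x' where "x' i = (if i < n then x i else 0)" for i
  have "(\<Sum>j<n. a i j * x' j) = (\<Sum>j<n. a i j * x j)" for i
    by (rule sum.cong) (auto simp: x'_def)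
  hence "quad_form (Suc n) a x' = quad_form n a x" "sq_norm (Suc n) x' = sq_norm n x"
    by (auto simp: quad_form_def sq_norm_def x'_def intro!: sum.cong)
  thus ?thesis using assms[of x'] by simp
qed

lemma shifted_solutions_close:
  fixes a :: "nat \<Rightarrow> nat \<Rightarrow> real" and g :: "nat \<Rightarrow> real \<Rightarrow> real"
  assumes c: "c > 0" and coercive: "\<And>x. c * sq_norm n x \<le> quad_form n a x"
    and mono: "\<And>i. i < n \<Longrightarrow> mono (g i)"
    and x: "\<And>i. i < n \<Longrightarrow> (\<Sum>j<n. a i j * x j) + g i (x i) + t * d i = 0"
    and y: "\<And>i. i < n \<Longrightarrow> (\<Sum>j<n. a i j * y j) + g i (y i) + s * d i = 0"
  shows "c\<^sup>2 * sq_norm n (\<lambda>i. x i - y i) \<le> (t - s)\<^sup>2 * sq_norm n d"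
proof -
  define S where "S = sq_norm n (\<lambda>i. x i - y i)"
  define P where "P = (\<Sum>i<n. (x i - y i) * d i)"
  have diff: "((\<Sum>j<n. a i j * x j) + g i (x i)) - ((\<Sum>j<n. a i j * y j) + g i (y i)) = - (t - s) * d i"
    if "i < n" for i
    using x[OF that] y[OF that] by (simp add: algebra_simps)
  have "c * S \<le> (\<Sum>i<n. (x i - y i) * (((\<Sum>j<n. a i j * x j) + g i (x i)) - ((\<Sum>j<n. a i j * y j) + g i (y i))))"
    unfolding S_def by (rule coercive_monotone_ineq[OF coercive mono])
  also have "\<dots> = - (t - s) * P"
    unfolding P_def sum_distrib_left by (intro sum.cong refl) (simp add: diff)
  finally have cS: "c * S \<le> - (t - s) * P" .
  have S: "0 \<le> S" unfolding S_def by (rule sq_norm_nonneg)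
  have "S * (c\<^sup>2 * S) = (c * S)\<^sup>2" by (simp add: power2_eq_square)
  also have "\<dots> \<le> (- (t - s) * P)\<^sup>2"
    using cS c S by (intro power_mono) auto
  also have "\<dots> = (t - s)\<^sup>2 * P\<^sup>2" by (simp add: power_mult_distrib power2_commute)
  also have "\<dots> \<le> (t - s)\<^sup>2 * (S * sq_norm n d)"
    unfolding P_def S_def sq_norm_def by (intro mult_left_mono Cauchy_Schwarz_ineq_sum) auto
  finally have le: "S * (c\<^sup>2 * S) \<le> S * ((t - s)\<^sup>2 * sq_norm n d)" by (simp add: mult_ac)
  show ?thesis
  proof (cases "S = 0")
    case False
    with S have "S > 0" by simp
    with le show ?thesis by (simp add: S_def)
  qed (simp add: S_def sq_norm_nonneg)
qed

lemma continuous_on_shifted_solution: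
  fixes a :: "nat \<Rightarrow> nat \<Rightarrow> real" and g :: "nat \<Rightarrow> real \<Rightarrow> real" and X :: "real \<Rightarrow> nat \<Rightarrow> real"
  assumes c: "c > 0" and coercive: "\<And>x. c * sq_norm n x \<le> quad_form n a x"
    and mono: "\<And>i. i < n \<Longrightarrow> mono (g i)"
    and X: "\<And>t i. i < n \<Longrightarrow> (\<Sum>j<n. a i j * X t j) + g i (X t i) + t * d i = 0"
  shows "continuous_on UNIV (\<lambda>t. \<Sum>j<n. b j * X t j)"
proof -
  define K where "K = sqrt (sq_norm n b * sq_norm n d) / c"
  have "K-lipschitz_on UNIV (\<lambda>t. \<Sum>j<n. b j * X t j)"
  proof (rule lipschitz_onI)
    show "0 \<le> K" unfolding K_def using c by (simp add: sq_norm_nonneg)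
    fix s t :: real
    let ?D = "(\<Sum>j<n. b j * X t j) - (\<Sum>j<n. b j * X s j)"
    have "c\<^sup>2 * ?D\<^sup>2 = c\<^sup>2 * (\<Sum>j<n. b j * (X t j - X s j))\<^sup>2"
      by (simp add: right_diff_distrib sum_subtractf)
    also have "\<dots> \<le> c\<^sup>2 * (sq_norm n b * sq_norm n (\<lambda>j. X t j - X s j))"
      unfolding sq_norm_def by (intro mult_left_mono Cauchy_Schwarz_ineq_sum) auto
    also have "\<dots> = sq_norm n b * (c\<^sup>2 * sq_norm n (\<lambda>j. X t j - X s j))" by simp
    also have "\<dots> \<le> sq_norm n b * ((t - s)\<^sup>2 * sq_norm n d)"
      by (intro mult_left_mono sq_norm_nonneg) (rule shifted_solutions_close[OF c coercive mono X X])
    also have "\<dots> = c\<^sup>2 * (K * dist t s)\<^sup>2"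
      using c by (simp add: K_def dist_real_def power_mult_distrib power_divide sq_norm_nonneg)
    finally have "\<bar>?D\<bar>\<^sup>2 \<le> (K * dist t s)\<^sup>2" using c by simp
    thus "dist (\<Sum>j<n. b j * X t j) (\<Sum>j<n. b j * X s j) \<le> K * dist t s"
      unfolding dist_real_def
      by (rule power2_le_imp_le) (use c in \<open>simp add: K_def sq_norm_nonneg\<close>)
  qed
  thus ?thesis by (rule lipschitz_on_continuous_on)
qed

lemma coercive_monotone_last_residual:
  fixes a :: "nat \<Rightarrow> nat \<Rightarrow> real" and g :: "nat \<Rightarrow> real \<Rightarrow> real"
  assumes "c \<ge> 0" and coercive: "\<And>x. c * sq_norm (Suc n) x \<le> quad_form (Suc n) a x"
    and mono: "\<And>i. i < Suc n \<Longrightarrow> mono (g i)"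
    and u: "\<And>i. i < n \<Longrightarrow> (\<Sum>j<Suc n. a i j * u j) + g i (u i) = 0"
    and v: "\<And>i. i < n \<Longrightarrow> (\<Sum>j<Suc n. a i j * v j) + g i (v i) = 0"
  shows "c * (u n - v n)\<^sup>2 \<le> (u n - v n) *
           (((\<Sum>j<Suc n. a n j * u j) + g n (u n)) - ((\<Sum>j<Suc n. a n j * v j) + g n (v n)))"
proof -
  have "(u n - v n)\<^sup>2 \<le> sq_norm (Suc n) (\<lambda>i. u i - v i)"
    using sq_norm_nonneg[of n "\<lambda>i. u i - v i"] by (simp add: sq_norm_def)
  hence "c * (u n - v n)\<^sup>2 \<le> c * sq_norm (Suc n) (\<lambda>i. u i - v i)"
    using assms(1) by (rule mult_left_mono)
  also have "\<dots> \<le> (\<Sum>i<Suc n. (u i - v i) *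
      (((\<Sum>j<Suc n. a i j * u j) + g i (u i)) - ((\<Sum>j<Suc n. a i j * v j) + g i (v i))))"
    by (rule coercive_monotone_ineq[OF coercive mono])
  also have "\<dots> = (u n - v n) *
      (((\<Sum>j<Suc n. a n j * u j) + g n (u n)) - ((\<Sum>j<Suc n. a n j * v j) + g n (v n)))"
    by (subst sum.lessThan_Suc) (simp del: sum.lessThan_Suc add: u v)
  finally show ?thesis .
qed

lemma increasing_function_has_root:
  fixes h :: "real \<Rightarrow> real"
  assumes c: "c > 0" and cont: "continuous_on UNIV h"
    and incr: "\<And>s t. s < t \<Longrightarrow> c * (t - s) \<le> h t - h s"
  obtains t where "h t = 0"
proof -
  define T where "T = \<bar>h 0\<bar> / c + 1"
  have T: "T > 0" "c * T = \<bar>h 0\<bar> + c" unfolding T_def using c by (auto simp: field_simps)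
  have "h (- T) \<le> 0" "0 \<le> h T"
    using incr[of "- T" 0] incr[of 0 T] T c by auto
  moreover have "\<forall>x. isCont h x"
    using cont by (simp add: continuous_on_eq_continuous_at)
  ultimately obtain t where "h t = 0"
    using IVT[of h "- T" 0 T] T by auto
  thus ?thesis by (rule that)
qed

text \<open>Solve the first \<open>n\<close> equations with the last unknown as a parameter \<open>t\<close>; the residual
  \<open>h t\<close> of the last equation is continuous and strictly increasing, hence has a zero.\<close>

lemma coercive_monotone_system_solvable_Suc:
  fixes a :: "nat \<Rightarrow> nat \<Rightarrow> real" and g :: "nat \<Rightarrow> real \<Rightarrow> real"
  assumes c: "c > 0" and coercive: "\<And>x. c * sq_norm (Suc n) x \<le> quad_form (Suc n) a x"
    and mono: "\<And>i. i < Suc n \<Longrightarrow> mono (g i)"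
    and cont: "\<And>i. i < Suc n \<Longrightarrow> continuous_on UNIV (g i)"
    and solvable: "\<And>g'. (\<And>i. i < n \<Longrightarrow> mono (g' i)) \<Longrightarrow> (\<And>i. i < n \<Longrightarrow> continuous_on UNIV (g' i))
                    \<Longrightarrow> \<exists>x. \<forall>i<n. (\<Sum>j<n. a i j * x j) + g' i (x i) = 0"
  shows "\<exists>x. \<forall>i<Suc n. (\<Sum>j<Suc n. a i j * x j) + g i (x i) = 0"
proof -
  have "\<exists>x. \<forall>i<n. (\<Sum>j<n. a i j * x j) + (g i (x i) + t * a i n) = 0" for t
  proof (rule solvable)
    fix i assume i: "i < n"
    show "mono (\<lambda>s. g i s + t * a i n)" using mono[of i] i by (simp add: mono_def)
    show "continuous_on UNIV (\<lambda>s. g i s + t * a i n)" using cont[of i] i by (auto intro!: continuous_intros)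
  qed
  then obtain X where "\<And>t. \<forall>i<n. (\<Sum>j<n. a i j * X t j) + (g i (X t i) + t * a i n) = 0"
    by metis
  hence X: "\<And>t i. i < n \<Longrightarrow> (\<Sum>j<n. a i j * X t j) + g i (X t i) + t * a i n = 0"
    by (simp add: add.assoc)
  define U where "U t i = (if i < n then X t i else t)" for t i
  define h where "h t = (\<Sum>j<Suc n. a n j * U t j) + g n t" for t
  have U_sum: "(\<Sum>j<Suc n. a i j * U t j) = (\<Sum>j<n. a i j * X t j) + a i n * t" for i t
    by (simp add: U_def)
  have rows: "(\<Sum>j<Suc n. a i j * U t j) + g i (U t i) = (if i < n then 0 else h t)" if "i < Suc n" for i t
    using X[of i t] that by (cases "i = n") (auto simp: U_sum h_def U_def algebra_simps)
  have "c * (t - s) \<le> h t - h s" if "s < t" for s t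
  proof -
    have "c * (U t n - U s n)\<^sup>2 \<le> (U t n - U s n) *
        (((\<Sum>j<Suc n. a n j * U t j) + g n (U t n)) - ((\<Sum>j<Suc n. a n j * U s j) + g n (U s n)))"
      using c rows by (intro coercive_monotone_last_residual[OF _ coercive mono]) auto
    hence "(t - s) * (c * (t - s)) \<le> (t - s) * (h t - h s)"
      using rows[of n] by (simp add: U_def power2_eq_square mult_ac)
    thus ?thesis using that by simp
  qed
  moreover have "continuous_on UNIV h"
  proof -
    have "h = (\<lambda>t. (\<Sum>j<n. a n j * X t j) + a n n * t + g n t)"
      by (rule ext) (simp only: h_def U_sum)
    moreover have "continuous_on UNIV (\<lambda>t. \<Sum>j<n. a n j * X t j)"
      by (rule continuous_on_shifted_solution[OF c coercive_restrict[OF coercive] mono X]) simp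
    ultimately show ?thesis
      using cont[of n] by (auto intro!: continuous_on_add continuous_intros)
  qed
  ultimately obtain t where "h t = 0" using increasing_function_has_root c by blast
  thus ?thesis using rows by (intro exI[of _ "U t"]) simp
qed

lemma coercive_monotone_system_solvable:
  fixes a :: "nat \<Rightarrow> nat \<Rightarrow> real" and g :: "nat \<Rightarrow> real \<Rightarrow> real"
  assumes "c > 0" and "\<And>x. c * sq_norm n x \<le> quad_form n a x"
    and "\<And>i. i < n \<Longrightarrow> mono (g i)" and "\<And>i. i < n \<Longrightarrow> continuous_on UNIV (g i)"
  shows "\<exists>x. \<forall>i<n. (\<Sum>j<n. a i j * x j) + g i (x i) = 0"
  using assms(2-)
proof (induction n arbitrary: g)
  case (Suc n)
  have solvable: "\<exists>x. \<forall>i<n. (\<Sum>j<n. a i j * x j) + g' i (x i) = 0"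
    if "\<And>i. i < n \<Longrightarrow> mono (g' i)" "\<And>i. i < n \<Longrightarrow> continuous_on UNIV (g' i)" for g'
    using Suc.IH[OF coercive_restrict[OF Suc.prems(1)] that] .
  show ?case
    using coercive_monotone_system_solvable_Suc[OF assms(1) Suc.prems(1) _ _ solvable] Suc.prems(2,3)
    by blast
qed simp

section \<open>The boundary value problem\<close>

lemma bvp_solution_exists:
  assumes c: "c > 0"
    and coercive: "\<And>y. vanishes_outside N y
                     \<Longrightarrow> c * (\<Sum>k\<in>{1..int N}. (y k)\<^sup>2) \<le> (\<Sum>k\<in>{1..int N}. y k * bvp_op p q y k)"
    and cont: "\<forall>k\<in>{1..int N}. continuous_on UNIV (f k)"
    and mono: "\<forall>k\<in>{1..int N}. mono (f k)"
  shows "\<exists>y. is_solution N p q f y"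
proof -
  define e where "e j k = (if k = int j + 1 then 1 else 0 :: real)" for j :: nat and k
  define embed where "embed x k = (\<Sum>j<N. x j * e j k)" for x k
  define a where "a i j = bvp_op p q (e j) (int i + 1)" for i j
  have embed_at: "embed x (int i + 1) = x i" if "i < N" for x i
    using that by (simp add: embed_def e_def if_distrib[of "(*) _"] cong: if_cong)
  have embed_vanishes: "vanishes_outside N (embed x)" for x
    unfolding vanishes_outside_def embed_def e_def by auto
  have a_sum: "(\<Sum>j<N. a i j * x j) = bvp_op p q (embed x) (int i + 1)" for x i
    unfolding embed_def a_def by (simp add: bvp_op_sum mult.commute)
  have "c * sq_norm N x \<le> quad_form N a x" for x
  proof -
    have "sq_norm N x = (\<Sum>k\<in>{1..int N}. (embed x k)\<^sup>2)"
      by (simp add: sq_norm_shift_int[symmetric] embed_at cong: sq_norm_cong)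
    moreover have "quad_form N a x = (\<Sum>k\<in>{1..int N}. embed x k * bvp_op p q (embed x) k)"
      using sum_lessThan_int[of "\<lambda>k. embed x (k + 1) * bvp_op p q (embed x) (k + 1)" N]
      by (simp add: quad_form_def a_sum embed_at)
    ultimately show ?thesis using coercive[OF embed_vanishes] by simp
  qed
  hence "\<exists>x. \<forall>i<N. (\<Sum>j<N. a i j * x j) + f (int i + 1) (x i) = 0"
    by (rule coercive_monotone_system_solvable[OF c]) (use cont mono in auto)
  then obtain x where x: "\<forall>i<N. (\<Sum>j<N. a i j * x j) + f (int i + 1) (x i) = 0" ..
  have "is_solution N p q f (embed x)"
    unfolding is_solution_iff
  proof (intro conjI ballI)
    fix k assume k: "k \<in> {1..int N}"
    define i where "i = nat (k - 1)"
    have i: "i < N" "k = int i + 1" using k by (auto simp: i_def)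
    show "bvp_op p q (embed x) k + f k (embed x k) = 0"
      using x i by (simp add: a_sum embed_at)
  qed (use embed_vanishes[of x] in \<open>auto simp: vanishes_outside_def\<close>)
  thus ?thesis by blast
qed

lemma bvp_op_truncate:
  assumes "y (-1) = 0" "y 0 = 0" "y (int N + 1) = 0" "y (int N + 2) = 0" and k: "k \<in> {1..int N}"
  shows "bvp_op p q (\<lambda>j. if j \<in> {1..int N} then y j else 0) k = bvp_op p q y k"
proof (rule bvp_op_local)
  fix j assume "\<bar>j - k\<bar> \<le> 2"
  hence "j \<in> {1..int N} \<or> j \<in> {-1, 0, int N + 1, int N + 2}" using k by auto
  thus "(if j \<in> {1..int N} then y j else 0) = y j" using assms by auto
qed

lemma bvp_solution_unique:
  assumes c: "c > 0"
    and coercive: "\<And>y. vanishes_outside N y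
                     \<Longrightarrow> c * (\<Sum>k\<in>{1..int N}. (y k)\<^sup>2) \<le> (\<Sum>k\<in>{1..int N}. y k * bvp_op p q y k)"
    and mono: "\<forall>k\<in>{1..int N}. mono (f k)"
    and y: "is_solution N p q f y" and z: "is_solution N p q f z"
  shows "\<forall>k\<in>{-1..int N + 2}. z k = y k"
proof -
  define u where "u j = (if j \<in> {1..int N} then z j - y j else 0)" for j
  have "vanishes_outside N u" by (auto simp: vanishes_outside_def u_def)
  have Lu: "bvp_op p q u k = f k (y k) - f k (z k)" if k: "k \<in> {1..int N}" for k
  proof -
    have "bvp_op p q u k = bvp_op p q (\<lambda>j. z j - y j) k"
      unfolding u_def using y z k by (intro bvp_op_truncate) (auto simp: is_solution_iff)
    moreover have "bvp_op p q y k + f k (y k) = 0" "bvp_op p q z k + f k (z k) = 0"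
      using y z k unfolding is_solution_iff by blast+
    ultimately show ?thesis by (simp add: bvp_op_diff)
  qed
  have "c * (\<Sum>k\<in>{1..int N}. (u k)\<^sup>2) \<le> (\<Sum>k\<in>{1..int N}. u k * bvp_op p q u k)"
    by (rule coercive) fact
  also have "\<dots> = (\<Sum>k\<in>{1..int N}. - ((z k - y k) * (f k (z k) - f k (y k))))"
    by (intro sum.cong refl) (simp add: Lu u_def algebra_simps)
  also have "\<dots> \<le> 0"
    using mono by (intro sum_nonpos) (simp add: mono_diff_mult_nonneg)
  finally have "(\<Sum>k\<in>{1..int N}. (u k)\<^sup>2) = 0"
    using c by (intro antisym sum_nonneg) (auto simp: mult_le_0_iff)
  hence inner: "z k = y k" if "k \<in> {1..int N}" for k
    using that by (simp add: sum_nonneg_eq_0_iff u_def)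
  show ?thesis
  proof
    fix k assume k: "k \<in> {-1..int N + 2}"
    show "z k = y k"
    proof (cases "k \<in> {1..int N}")
      case False
      hence "k \<in> {-1, 0, int N + 1, int N + 2}" using k by auto
      thus ?thesis using y z by (auto simp: is_solution_iff)
    qed (rule inner)
  qed
qed

text \<open>Assumption 6 is assumption 4
  rearranged.\<close>

theorem theorem4:
  fixes N :: nat and f :: "int \<Rightarrow> real \<Rightarrow> real" and p q :: "int \<Rightarrow> real"
  assumes "N \<ge> 1"
    and "\<forall>k \<in> {1..int N}. continuous_on UNIV (f k)"
    and "\<exists>m > 0. \<forall>k \<in> {1..int N}. \<forall>s. \<bar>s\<bar> \<ge> m \<longrightarrow> s * f k s \<ge> 0"
    and "eta' N p * pmin N p - eta N q * qmax N q > 0"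
    and "\<forall>k \<in> {1..int N}. mono (f k)"
    and "pmin N p * eta' N p > qmax N q * eta N q"
  shows "\<exists>y. is_solution N p q f y \<and>
           (\<forall>z. is_solution N p q f z \<longrightarrow> (\<forall>k \<in> {-1..int N + 2}. z k = y k))"
proof -
  define c where "c = eta' N p * pmin N p - eta N q * qmax N q"
  have c: "c > 0" using assms(4) by (simp add: c_def)
  have coercive: "c * (\<Sum>k\<in>{1..int N}. (y k)\<^sup>2) \<le> (\<Sum>k\<in>{1..int N}. y k * bvp_op p q y k)"
    if "vanishes_outside N y" for y
    unfolding c_def by (rule bvp_op_coercive[OF assms(1) that])
  obtain y where "is_solution N p q f y"
    using bvp_solution_exists[OF c coercive assms(2) assms(5)] by blast
  thus ?thesis using bvp_solution_unique[OF c coercive assms(5)] by blast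
qed

end
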